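(* There exists a constant $b_N>0$ depending only on $N$ such that for every measurable set $E\subset\mathbb{R}^N$ with $|E|<\infty$ and every $t>0$, $$\|P_t\mathbf 1_E-\mathbf 1_E\|_{L^1}\ \ge\ |E|-\frac{b_N}{V(t/2)}\,e^{-\frac t4\operatorname{tr}B}\,|E|^2.$$
   Context: Let $N\ge 2$. Let $Q,B$ be real constant $N\times N$ matrices with $Q=Q^\star\ge 0$, and assume $K(t)=\frac1t\int_0^t e^{rB}Qe^{rB^\star}\,dr$ is positive definite for every $t>0$. Let $\omega_N$ be the volume of the unit ball, $V(t)=\omega_N(\det(tK(t)))^{1/2}$, $m_t(X,Y)^2=\langle K(t)^{-1}(Y-e^{tB}X),\,Y-e^{tB}X\rangle$, $p(X,Y,t)=(4\pi)^{-N/2}(\det(tK(t)))^{-1/2}\exp\!\big(-m_t(X,Y)^2/(4t)\big)$, and $P_tf(X)=\int_{\mathbb{R}^N}p(X,Y,t)f(Y)\,dY$. $|E|$ is Lebesgue measure, $\mathbf 1_E$ the indicator function. *)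

theory Defs
  imports "HOL-Analysis.Analysis"
begin

primrec mat_pow :: "real^'n^'n \<Rightarrow> nat \<Rightarrow> real^'n^'n" where
  "mat_pow A 0 = mat 1"
| "mat_pow A (Suc k) = A ** mat_pow A k"

definition mat_exp :: "real^'n^'n \<Rightarrow> real^'n^'n" where
  "mat_exp A = (\<Sum>k. (1 / fact k) *\<^sub>R mat_pow A k)"

definition pos_semidef :: "real^'n^'n \<Rightarrow> bool" where
  "pos_semidef A \<longleftrightarrow> (\<forall>x. 0 \<le> x \<bullet> (A *v x))"

definition pos_def :: "real^'n^'n \<Rightarrow> bool" where
  "pos_def A \<longleftrightarrow> (\<forall>x. x \<noteq> 0 \<longrightarrow> 0 < x \<bullet> (A *v x))"

definition Kmat :: "real^'n^'n \<Rightarrow> real^'n^'n \<Rightarrow> real \<Rightarrow> real^'n^'n" where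
  "Kmat Q B t = (1 / t) *\<^sub>R integral {0..t}
      (\<lambda>r. mat_exp (r *\<^sub>R B) ** Q ** mat_exp (r *\<^sub>R transpose B))"

definition omega :: "'n::finite itself \<Rightarrow> real" where
  "omega _ = measure lebesgue (ball (0::real^'n) 1)"

definition Vfun :: "real^'n^'n \<Rightarrow> real^'n^'n \<Rightarrow> real \<Rightarrow> real" where
  "Vfun Q B t = omega TYPE('n) * sqrt (det (t *\<^sub>R Kmat Q B t))"

definition msq :: "real^'n^'n \<Rightarrow> real^'n^'n \<Rightarrow> real \<Rightarrow> real^'n \<Rightarrow> real^'n \<Rightarrow> real" where
  "msq Q B t X Y = (let d = Y - mat_exp (t *\<^sub>R B) *v X in
      (matrix_inv (Kmat Q B t) *v d) \<bullet> d)"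

definition kernel :: "real^'n^'n \<Rightarrow> real^'n^'n \<Rightarrow> real^'n \<Rightarrow> real^'n \<Rightarrow> real \<Rightarrow> real" where
  "kernel Q B X Y t = (4 * pi) powr (- real CARD('n) / 2)
      * (det (t *\<^sub>R Kmat Q B t)) powr (-1/2) * exp (- msq Q B t X Y / (4 * t))"

definition Pt :: "real^'n^'n \<Rightarrow> real^'n^'n \<Rightarrow> real \<Rightarrow> (real^'n \<Rightarrow> real) \<Rightarrow> real^'n \<Rightarrow> real" where
  "Pt Q B t f X = (\<integral>Y. kernel Q B X Y t * f Y \<partial>lebesgue)"

end

theory Submission
  imports Defs
begin

text \<open>
  With \<open>M(t) = tK(t)\<close>, the kernel is at most \<open>c = (4\<pi>)^(-N/2) / sqrt (det M(t))\<close>, so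
  \<open>P_t 1_E \<le> c |E|\<close> and integrating \<open>1 - P_t 1_E\<close> over \<open>E\<close> gives \<open>|E| - c |E|^2\<close>.
  To compare \<open>c\<close> with \<open>V(t/2)\<close>, split the integral defining \<open>M(t)\<close> at \<open>t/2\<close>:
  \<open>M(t) = M(t/2) + e^(t/2 B) M(t/2) e^(t/2 B*)\<close>. Both summands are positive definite and the
  determinant is monotone on positive semidefinite matrices, so \<open>det M(t)\<close> dominates both
  \<open>det M(t/2)\<close> and, by Liouville's formula \<open>det e^A = e^(tr A)\<close>, \<open>e^(t tr B) det M(t/2)\<close>;
  hence, as \<open>max 1 (x^2) \<ge> x\<close>, \<open>det M(t) \<ge> e^(t/2 tr B) det M(t/2)\<close>.
\<close>

subsection \<open>The matrix exponential\<close>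

text \<open>Square matrices form a Banach algebra under the operator norm; wrapping them in a type of
  class \<open>real_normed_algebra_1\<close> lets us use the library's \<open>exp\<close>.\<close>

typedef (overloaded) 'n sqmat = "UNIV :: (real^'n::finite^'n) set"
  morphisms vecmat Sqmat by auto

setup_lifting type_definition_sqmat

instantiation sqmat :: (finite) real_vector
begin
lift_definition zero_sqmat :: "'a sqmat" is "0" .
lift_definition plus_sqmat :: "'a sqmat \<Rightarrow> 'a sqmat \<Rightarrow> 'a sqmat" is "(+)" .
lift_definition minus_sqmat :: "'a sqmat \<Rightarrow> 'a sqmat \<Rightarrow> 'a sqmat" is "(-)" .
lift_definition uminus_sqmat :: "'a sqmat \<Rightarrow> 'a sqmat" is "uminus" .
lift_definition scaleR_sqmat :: "real \<Rightarrow> 'a sqmat \<Rightarrow> 'a sqmat" is "scaleR" .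
instance by standard (transfer, simp add: algebra_simps scaleR_add_right scaleR_add_left)+
end

lemma matrix_add_rdistrib: "(A + B) ** (C::real^'n::finite^'n) = A ** C + B ** C"
  by (simp add: matrix_matrix_mult_def vec_eq_iff sum.distrib algebra_simps)

instantiation sqmat :: (finite) ring_1
begin
lift_definition one_sqmat :: "'a sqmat" is "mat 1" .
lift_definition times_sqmat :: "'a sqmat \<Rightarrow> 'a sqmat \<Rightarrow> 'a sqmat" is "(**)" .
instance
proof
  fix a b c :: "'a sqmat"
  show "a * b * c = a * (b * c)" by transfer (simp add: matrix_mul_assoc)
  show "1 * a = a" by transfer simp
  show "a * 1 = a" by transfer simp
  show "(a + b) * c = a * c + b * c" by transfer (rule matrix_add_rdistrib)
  show "a * (b + c) = a * b + a * c" by transfer (rule matrix_add_ldistrib)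
  show "(0::'a sqmat) \<noteq> 1" by transfer (simp add: vec_eq_iff mat_def)
qed
end

lemma matrix_mul_scaleR_left: "(r *\<^sub>R A) ** B = r *\<^sub>R (A ** (B::real^'n::finite^'n))"
  by (rule scalar_matrix_assoc[symmetric])

lemma matrix_mul_scaleR_right: "A ** (r *\<^sub>R B) = r *\<^sub>R (A ** (B::real^'n::finite^'n))"
  by (simp add: matrix_scalar_ac matrix_mul_scaleR_left)

instance sqmat :: (finite) real_algebra_1
  by standard (transfer, simp add: matrix_mul_scaleR_left matrix_mul_scaleR_right)+

instantiation sqmat :: (finite) real_normed_vector
begin
definition norm_sqmat :: "'a sqmat \<Rightarrow> real" where "norm_sqmat A = onorm (\<lambda>x. vecmat A *v x)"
definition sgn_sqmat :: "'a sqmat \<Rightarrow> 'a sqmat" where "sgn_sqmat x = x /\<^sub>R norm x"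
definition dist_sqmat :: "'a sqmat \<Rightarrow> 'a sqmat \<Rightarrow> real" where "dist_sqmat x y = norm (x - y)"
definition uniformity_sqmat :: "('a sqmat \<times> 'a sqmat) filter" where
  "uniformity_sqmat = (INF e\<in>{0 <..}. principal {(x, y). dist x y < e})"
definition open_sqmat :: "'a sqmat set \<Rightarrow> bool" where
  "open_sqmat U \<longleftrightarrow> (\<forall>x\<in>U. eventually (\<lambda>(x', y). x' = x \<longrightarrow> y \<in> U) uniformity)"
instance
proof
  fix r :: real and x y :: "'a sqmat"
  show "(norm x = 0) = (x = 0)"
    unfolding norm_sqmat_def onorm_eq_0[OF matrix_vector_mul_bounded_linear]
  proof transfer
    fix x :: "real^'a^'a"
    show "(\<forall>v. x *v v = 0) = (x = 0)"
      using matrix_eq[of x 0] by simp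
  qed
  show "norm (x + y) \<le> norm x + norm y"
    unfolding norm_sqmat_def
  proof transfer
    fix x y :: "real^'a^'a"
    have "onorm (\<lambda>v. x *v v + y *v v) \<le> onorm (\<lambda>v. x *v v) + onorm (\<lambda>v. y *v v)"
      by (rule onorm_triangle[OF matrix_vector_mul_bounded_linear matrix_vector_mul_bounded_linear])
    then show "onorm (\<lambda>v. (x + y) *v v) \<le> onorm (\<lambda>v. x *v v) + onorm (\<lambda>v. y *v v)"
      by (simp add: matrix_vector_mult_add_rdistrib)
  qed
  show "norm (r *\<^sub>R x) = \<bar>r\<bar> * norm x"
    unfolding norm_sqmat_def
  proof transfer
    fix r and x :: "real^'a^'a"
    have "onorm (\<lambda>v. r *\<^sub>R (x *v v)) = \<bar>r\<bar> * onorm (\<lambda>v. x *v v)"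
      by (rule onorm_scaleR[OF matrix_vector_mul_bounded_linear])
    then show "onorm (\<lambda>v. (r *\<^sub>R x) *v v) = \<bar>r\<bar> * onorm (\<lambda>v. x *v v)"
      by (simp add: scaleR_matrix_vector_assoc)
  qed
qed (rule sgn_sqmat_def dist_sqmat_def open_sqmat_def uniformity_sqmat_def)+
end

instance sqmat :: (finite) real_normed_algebra_1
proof
  fix x y :: "'a sqmat"
  show "norm (x * y) \<le> norm x * norm y"
    unfolding norm_sqmat_def
    by transfer (use onorm_compose[OF matrix_vector_mul_bounded_linear matrix_vector_mul_bounded_linear]
        in \<open>simp add: o_def matrix_vector_mul_assoc\<close>)
  have "(\<lambda>v. mat 1 *v v) = (\<lambda>v::real^'a. v)" by simp
  then show "norm (1::'a sqmat) = 1"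
    unfolding norm_sqmat_def by transfer (simp add: onorm_id)
qed

lemma norm_vecmat_le: "norm (vecmat (A::'n::finite sqmat)) \<le> norm A * (real CARD('n) * real CARD('n))"
proof -
  have "norm (vecmat A) \<le> (\<Sum>i\<in>UNIV. norm (vecmat A $ i))"
    unfolding norm_vec_def by (rule L2_set_le_sum) simp
  also have "\<dots> \<le> (\<Sum>i\<in>UNIV. \<Sum>j\<in>UNIV. \<bar>vecmat A $ i $ j\<bar>)"
    by (intro sum_mono norm_le_l1_cart)
  also have "\<dots> \<le> (\<Sum>i\<in>(UNIV::'n set). \<Sum>j\<in>(UNIV::'n set). norm A)"
    by (intro sum_mono) (simp add: norm_sqmat_def matrix_component_le_onorm)
  finally show ?thesis by (simp add: mult_ac)
qed

lemma norm_Sqmat_le: "norm (Sqmat X :: 'n::finite sqmat) \<le> norm X * (real CARD('n) * real CARD('n))"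
proof -
  have "norm (Sqmat X :: 'n sqmat) \<le> (\<Sum>i\<in>UNIV. \<Sum>j\<in>UNIV. \<bar>X $ i $ j\<bar>)"
    unfolding norm_sqmat_def using onorm_le_matrix_component_sum[of X] by (simp add: Sqmat_inverse)
  also have "\<dots> \<le> (\<Sum>i\<in>(UNIV::'n set). \<Sum>j\<in>(UNIV::'n set). norm X)"
    by (intro sum_mono) (rule order_trans[OF component_le_norm_cart Finite_Cartesian_Product.norm_nth_le])
  finally show ?thesis by (simp add: mult_ac)
qed

lemma bounded_linear_vecmat: "bounded_linear (vecmat :: 'n::finite sqmat \<Rightarrow> _)"
  by (rule bounded_linear_intro[where K="real CARD('n) * real CARD('n)"])
    (simp_all add: plus_sqmat.rep_eq scaleR_sqmat.rep_eq norm_vecmat_le)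

lemma bounded_linear_Sqmat: "bounded_linear (Sqmat :: _ \<Rightarrow> 'n::finite sqmat)"
  by (rule bounded_linear_intro[where K="real CARD('n) * real CARD('n)"])
    (simp_all add: plus_sqmat.abs_eq scaleR_sqmat.abs_eq norm_Sqmat_le)

instance sqmat :: (finite) banach
proof
  fix X :: "nat \<Rightarrow> 'a sqmat"
  assume "Cauchy X"
  then have "Cauchy (\<lambda>n. vecmat (X n))" by (rule bounded_linear.Cauchy[OF bounded_linear_vecmat])
  then obtain L where "(\<lambda>n. vecmat (X n)) \<longlonglongrightarrow> L"
    using Cauchy_convergent_iff convergent_def by blast
  then have "(\<lambda>n. Sqmat (vecmat (X n))) \<longlonglongrightarrow> (Sqmat L :: 'a sqmat)"
    by (rule bounded_linear.tendsto[OF bounded_linear_Sqmat])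
  then show "convergent X" by (simp add: vecmat_inverse convergent_def) blast
qed

lemma vecmat_Sqmat [simp]: "vecmat (Sqmat A) = A"
  by (simp add: Sqmat_inverse)

lemma vecmat_power: "vecmat (X ^ k) = mat_pow (vecmat (X::'n::finite sqmat)) k"
  by (induction k) (simp_all add: one_sqmat.rep_eq times_sqmat.rep_eq)

lemma Sqmat_mult: "Sqmat (A ** B) = (Sqmat A * Sqmat B :: 'n::finite sqmat)"
  by (metis vecmat_Sqmat vecmat_inverse times_sqmat.rep_eq)

lemma mat_exp_eq_exp: "mat_exp A = vecmat (exp (Sqmat A :: 'n::finite sqmat))"
proof -
  have "vecmat (exp (Sqmat A :: 'n sqmat)) = (\<Sum>k. vecmat ((Sqmat A :: 'n sqmat) ^ k /\<^sub>R fact k))"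
    unfolding exp_def by (rule bounded_linear.suminf[OF bounded_linear_vecmat summable_exp_generic])
  then show ?thesis
    by (simp add: mat_exp_def scaleR_sqmat.rep_eq vecmat_power divide_inverse)
qed

lemma summable_mat_exp: "summable (\<lambda>k. (1 / fact k) *\<^sub>R mat_pow (A::real^'n::finite^'n) k)"
  using bounded_linear.summable[OF bounded_linear_vecmat summable_exp_generic[of "Sqmat A :: 'n sqmat"]]
  by (simp add: scaleR_sqmat.rep_eq vecmat_power divide_inverse)

lemma mat_exp_add:
  "A ** B = B ** A \<Longrightarrow> mat_exp (A + B) = mat_exp A ** mat_exp (B::real^'n::finite^'n)"
  unfolding mat_exp_eq_exp plus_sqmat.abs_eq[symmetric]
  by (subst exp_add_commuting) (simp_all add: times_sqmat.rep_eq flip: Sqmat_mult)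

lemma mat_exp_0 [simp]: "mat_exp (0::real^'n::finite^'n) = mat 1"
  by (simp add: mat_exp_eq_exp zero_sqmat.abs_eq[symmetric] one_sqmat.rep_eq)

lemma mat_exp_scaleR_add:
  "mat_exp ((s + h) *\<^sub>R B) = mat_exp (s *\<^sub>R B) ** mat_exp (h *\<^sub>R (B::real^'n::finite^'n))"
  by (simp add: scaleR_add_left mat_exp_add matrix_mul_scaleR_left matrix_mul_scaleR_right)

lemma mat_pow_Suc_right: "mat_pow A (Suc k) = mat_pow A k ** (A::real^'n::finite^'n)"
  using arg_cong[OF power_Suc2[of "Sqmat A :: 'n sqmat" k], of vecmat]
  by (simp add: vecmat_power times_sqmat.rep_eq del: power_Suc)

lemma transpose_mat_pow: "transpose (mat_pow A k) = mat_pow (transpose (A::real^'n::finite^'n)) k"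
proof (induction k)
  case (Suc k)
  have "transpose (mat_pow A (Suc k)) = transpose (mat_pow A k ** A)"
    by (simp only: mat_pow_Suc_right)
  also have "\<dots> = mat_pow (transpose A) (Suc k)"
    by (simp add: matrix_transpose_mul Suc)
  finally show ?case .
qed simp

lemma bounded_linear_transpose: "bounded_linear (transpose :: real^'n::finite^'m::finite \<Rightarrow> _)"
  unfolding linear_conv_bounded_linear[symmetric] by (auto simp: linear_iff transpose_def vec_eq_iff)

lemma bounded_linear_congruence: "bounded_linear (\<lambda>X. (L::real^'n::finite^'n) ** X ** (R::real^'n^'n))"
  unfolding linear_conv_bounded_linear[symmetric] linear_iff
proof (intro conjI allI)
  fix X Y :: "real^'n^'n" and c :: real
  show "L ** (X + Y) ** R = L ** X ** R + L ** Y ** R"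
    by (simp add: matrix_add_ldistrib matrix_add_rdistrib)
  show "L ** (c *\<^sub>R X) ** R = c *\<^sub>R (L ** X ** R)"
    by (simp only: matrix_mul_scaleR_left matrix_mul_scaleR_right)
qed

lemma transpose_mat_exp: "transpose (mat_exp A) = mat_exp (transpose (A::real^'n::finite^'n))"
  unfolding mat_exp_def
  by (subst bounded_linear.suminf[OF bounded_linear_transpose summable_mat_exp])
     (simp add: transpose_mat_pow transpose_scalar)

lemma has_real_derivative_mat_exp_entry:
  fixes B :: "real^'n::finite^'n"
  shows "((\<lambda>s. mat_exp (s *\<^sub>R B) $ i $ j) has_real_derivative (mat_exp (s *\<^sub>R B) ** B) $ i $ j) (at s)"
proof -
  let ?X = "Sqmat B :: 'n sqmat"
  have entry: "bounded_linear (\<lambda>M::'n sqmat. vecmat M $ i $ j)"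
    using bounded_linear_compose[OF bounded_linear_vec_nth[of j]
        bounded_linear_compose[OF bounded_linear_vec_nth[of i] bounded_linear_vecmat]]
    by (simp add: o_def)
  from bounded_linear.has_vector_derivative[OF entry exp_scaleR_has_vector_derivative_right[of ?X s]]
  show ?thesis
    by (simp add: has_real_derivative_iff_has_vector_derivative mat_exp_eq_exp times_sqmat.rep_eq
        flip: scaleR_sqmat.abs_eq)
qed

text \<open>Liouville's formula, via the Leibniz expansion: at \<open>h = 0\<close> only the identity permutation
  contributes to the derivative of \<open>det (exp (h B))\<close>.\<close>

lemma sum_entry_prod_mat_1_permutes:
  fixes B :: "real^'n::finite^'n"
  assumes p: "p permutes (UNIV::'n set)"
  shows "(\<Sum>i\<in>UNIV. B $ i $ p i * (\<Prod>j\<in>UNIV - {i}. (mat 1 :: real^'n^'n) $ j $ p j))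
         = (if p = id then trace B else 0)"
proof (cases "p = id")
  case True
  then show ?thesis by (simp add: trace_def mat_def)
next
  case False
  have off_diagonal: "(\<Prod>j\<in>UNIV - {i}. (mat 1 :: real^'n^'n) $ j $ p j) = 0" for i
  proof (rule ccontr)
    assume "(\<Prod>j\<in>UNIV - {i}. (mat 1 :: real^'n^'n) $ j $ p j) \<noteq> 0"
    then have fixes_others: "\<forall>j\<in>UNIV - {i}. p j = j"
      by (auto simp: mat_def prod_zero_iff split: if_splits)
    then have "p i = i"
      using permutes_inj[OF p] by (metis DiffI injD singletonD UNIV_I)
    with fixes_others False show False by (auto simp: fun_eq_iff)
  qed
  then show ?thesis
    using False by (simp add: off_diagonal)
qed

lemma has_real_derivative_det_mat_exp_0:
  fixes B :: "real^'n::finite^'n"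
  shows "((\<lambda>h. det (mat_exp (h *\<^sub>R B))) has_real_derivative trace B) (at 0)"
proof -
  let ?I = "mat 1 :: real^'n^'n" and ?P = "{p. p permutes (UNIV::'n set)}"
  have "((\<lambda>h. of_int (sign p) * (\<Prod>i\<in>UNIV. mat_exp (h *\<^sub>R B) $ i $ p i)) has_real_derivative
      of_int (sign p) * (\<Sum>i\<in>UNIV. B $ i $ p i * (\<Prod>j\<in>UNIV - {i}. ?I $ j $ p j))) (at 0)" for p
  proof -
    have "((\<lambda>h. \<Prod>i\<in>UNIV. mat_exp (h *\<^sub>R B) $ i $ p i) has_real_derivative
        (\<Sum>i\<in>UNIV. (mat_exp (0 *\<^sub>R B) ** B) $ i $ p i * (\<Prod>j\<in>UNIV - {i}. mat_exp (0 *\<^sub>R B) $ j $ p j)))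
        (at 0)"
      by (rule has_field_derivative_prod) (rule has_real_derivative_mat_exp_entry)
    then show ?thesis by (intro DERIV_cmult) simp
  qed
  then have "((\<lambda>h. \<Sum>p\<in>?P. of_int (sign p) * (\<Prod>i\<in>UNIV. mat_exp (h *\<^sub>R B) $ i $ p i))
      has_real_derivative
      (\<Sum>p\<in>?P. of_int (sign p) * (\<Sum>i\<in>UNIV. B $ i $ p i * (\<Prod>j\<in>UNIV - {i}. ?I $ j $ p j))))
      (at 0)"
    by (intro DERIV_sum)
  also have "(\<Sum>p\<in>?P. of_int (sign p) * (\<Sum>i\<in>UNIV. B $ i $ p i * (\<Prod>j\<in>UNIV - {i}. ?I $ j $ p j)))
     = (\<Sum>p\<in>?P. if p = id then trace B else 0)"
    by (rule sum.cong) (auto simp: sum_entry_prod_mat_1_permutes)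
  also have "\<dots> = trace B"
    by (simp add: sum.delta' permutes_id)
  finally show ?thesis unfolding det_def .
qed

lemma det_mat_exp: "det (mat_exp (s *\<^sub>R B)) = exp (s * trace (B::real^'n::finite^'n))"
proof -
  define g where "g h = det (mat_exp (h *\<^sub>R B))" for h
  have g': "(g has_real_derivative g x * trace B) (at x)" for x
  proof -
    have "(\<lambda>h. g (h + x)) = (\<lambda>h. g x * g h)"
      by (simp add: g_def mat_exp_scaleR_add det_mul add.commute mult.commute)
    moreover have "((\<lambda>h. g x * g h) has_real_derivative g x * trace B) (at 0)"
      unfolding g_def by (intro DERIV_cmult has_real_derivative_det_mat_exp_0)
    ultimately show ?thesis
      using DERIV_shift[of g "g x * trace B" 0 x] by simp
  qed
  have "((\<lambda>h. g h * exp (- h * trace B)) has_real_derivative 0) (at x)" for x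
  proof -
    have "((\<lambda>h. exp (- h * trace B)) has_real_derivative exp (- x * trace B) * (- trace B)) (at x)"
      by (auto intro!: derivative_eq_intros)
    from DERIV_mult[OF g' this] show ?thesis by (simp add: algebra_simps)
  qed
  then have "g s * exp (- s * trace B) = g 0 * exp (- 0 * trace B)"
    by (intro DERIV_isconst_all) auto
  then show ?thesis
    by (simp add: g_def exp_minus field_simps)
qed

subsection \<open>Symmetric matrices\<close>

lemma inner_matrix_vector_transpose: "x \<bullet> (M *v y) = (transpose M *v x) \<bullet> (y::real^'n::finite)"
  by (simp add: dot_lmul_matrix)

lemma linear_coeff_eq_0_if_quadratic_nonpos:
  fixes a b :: real
  assumes nonpos: "\<And>e. 2 * e * a + e\<^sup>2 * b \<le> 0"
  shows "a = 0"
proof (rule ccontr)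
  assume "a \<noteq> 0"
  define d where "d = \<bar>b\<bar> + 1"
  have "d > 0" by (simp add: d_def add_nonneg_pos)
  have "2 * (a / d) * a + (a / d)\<^sup>2 * b = (a\<^sup>2 / d\<^sup>2) * (2 * d + b)"
    using \<open>d > 0\<close> by (simp add: power2_eq_square field_simps)
  also have "\<dots> > 0"
    using \<open>a \<noteq> 0\<close> \<open>d > 0\<close> by (intro mult_pos_pos) (auto simp: d_def abs_if)
  finally show False using nonpos[of "a / d"] by simp
qed

text \<open>The Rayleigh quotient argument: if \<open>v\<close> maximises \<open>y \<bullet> Ay\<close> on the unit sphere of \<open>W\<close>, then
  the component \<open>u\<close> of \<open>Av\<close> orthogonal to \<open>v\<close> vanishes, because moving \<open>v\<close> towards \<open>u\<close> would
  increase the quotient to first order.\<close>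

lemma symmetric_max_quadratic_form_eigenvector:
  fixes A :: "real^'n::finite^'n"
  assumes sym: "transpose A = A" and W: "subspace W" and inv: "\<And>x. x \<in> W \<Longrightarrow> A *v x \<in> W"
    and v: "v \<in> W" "norm v = 1"
    and max: "\<And>y. y \<in> W \<Longrightarrow> norm y = 1 \<Longrightarrow> y \<bullet> (A *v y) \<le> v \<bullet> (A *v v)"
  shows "A *v v = (v \<bullet> (A *v v)) *\<^sub>R v"
proof -
  define c where "c = v \<bullet> (A *v v)"
  define u where "u = A *v v - c *\<^sub>R v"
  have vv: "v \<bullet> v = 1" using v(2) by (simp add: norm_eq_1)
  have sym_inner: "x \<bullet> (A *v y) = (A *v x) \<bullet> y" for x y
    using inner_matrix_vector_transpose[of x A y] sym by simp
  have bound: "x \<bullet> (A *v x) \<le> c * (x \<bullet> x)" if "x \<in> W" for x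
  proof (cases "x = 0")
    case False
    have "(x /\<^sub>R norm x) \<bullet> (A *v (x /\<^sub>R norm x)) \<le> c"
      unfolding c_def using False that W by (intro max) (simp_all add: subspace_scale)
    then show ?thesis
      using False by (simp add: matrix_vector_mult_scaleR power2_norm_eq_inner[symmetric]
          field_simps power2_eq_square)
  qed simp
  have uW: "u \<in> W" unfolding u_def using inv[OF v(1)] v(1) W by (simp add: subspace_diff subspace_scale)
  have uv: "v \<bullet> u = 0" unfolding u_def using vv by (simp add: c_def inner_diff_right)
  have "v \<bullet> (A *v u) = (u + c *\<^sub>R v) \<bullet> u"
    unfolding sym_inner by (simp add: u_def)
  also have "\<dots> = u \<bullet> u"
    by (simp add: inner_add_left uv)
  finally have vAu: "v \<bullet> (A *v u) = u \<bullet> u" .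
  have "2 * e * (u \<bullet> u) + e\<^sup>2 * (u \<bullet> (A *v u) - c * (u \<bullet> u)) \<le> 0" for e
  proof -
    have "v + e *\<^sub>R u \<in> W" using v(1) uW W by (simp add: subspace_add subspace_scale)
    from bound[OF this] show ?thesis
      using vv uv vAu sym_inner[of u v]
      by (simp add: c_def matrix_vector_right_distrib matrix_vector_mult_scaleR inner_add_left
          inner_add_right power2_eq_square algebra_simps inner_commute)
  qed
  then have "u \<bullet> u = 0" by (rule linear_coeff_eq_0_if_quadratic_nonpos)
  then show ?thesis by (simp add: u_def c_def)
qed

lemma symmetric_matrix_eigenvector_in_invariant_subspace:
  fixes A :: "real^'n::finite^'n"
  assumes sym: "transpose A = A" and W: "subspace W" and inv: "\<And>x. x \<in> W \<Longrightarrow> A *v x \<in> W"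
    and w: "w \<in> W" "w \<noteq> 0"
  shows "\<exists>v\<in>W. norm v = 1 \<and> (\<exists>c. A *v v = c *\<^sub>R v)"
proof -
  let ?S = "W \<inter> sphere 0 1"
  have "compact ?S" by (intro closed_Int_compact closed_subspace W compact_sphere)
  moreover have "w /\<^sub>R norm w \<in> ?S" using w W by (simp add: subspace_scale)
  moreover have "continuous_on ?S (\<lambda>x. x \<bullet> (A *v x))"
    by (intro continuous_intros linear_continuous_on matrix_vector_mul_bounded_linear)
  ultimately obtain v where "v \<in> ?S" and "\<And>y. y \<in> ?S \<Longrightarrow> y \<bullet> (A *v y) \<le> v \<bullet> (A *v v)"
    using continuous_attains_sup[of ?S "\<lambda>x. x \<bullet> (A *v x)"] by blast
  then show ?thesis
    using symmetric_max_quadratic_form_eigenvector[OF sym W inv, of v] by auto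
qed

lemma symmetric_matrix_orthonormal_eigenvectors:
  fixes A :: "real^'n::finite^'n"
  assumes sym: "transpose A = A" and "k \<le> CARD('n)"
  shows "\<exists>S. finite S \<and> card S = k \<and> (\<forall>s\<in>S. norm s = 1 \<and> (\<exists>c. A *v s = c *\<^sub>R s))
      \<and> (\<forall>s\<in>S. \<forall>s'\<in>S. s \<noteq> s' \<longrightarrow> s \<bullet> s' = 0)"
  using \<open>k \<le> CARD('n)\<close>
proof (induction k)
  case 0
  then show ?case by (intro exI[of _ "{}"]) auto
next
  case (Suc k)
  then obtain S where S: "finite S" "card S = k" "\<forall>s\<in>S. norm s = 1 \<and> (\<exists>c. A *v s = c *\<^sub>R s)"
    "\<forall>s\<in>S. \<forall>s'\<in>S. s \<noteq> s' \<longrightarrow> s \<bullet> s' = 0" by auto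
  define W where "W = {x. \<forall>s\<in>S. s \<bullet> x = 0}"
  have W: "subspace W" unfolding W_def subspace_def by (auto simp: inner_add_right)
  have inv: "A *v x \<in> W" if "x \<in> W" for x
  proof -
    have "s \<bullet> (A *v x) = 0" if "s \<in> S" for s
    proof -
      obtain c where "A *v s = c *\<^sub>R s" using S(3) \<open>s \<in> S\<close> by blast
      then show ?thesis
        using inner_matrix_vector_transpose[of s A x] sym \<open>x \<in> W\<close> \<open>s \<in> S\<close> by (simp add: W_def)
    qed
    then show ?thesis by (simp add: W_def)
  qed
  have "dim S < DIM(real^'n)"
    using dim_le_card[OF span_superset S(1)] S(2) Suc.prems by simp
  then obtain x where x: "x \<noteq> 0" "\<And>y. y \<in> span S \<Longrightarrow> orthogonal x y"
    using orthogonal_to_subspace_exists by blast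
  have "x \<in> W" using x(2)[OF span_base] by (auto simp: W_def orthogonal_def inner_commute)
  from symmetric_matrix_eigenvector_in_invariant_subspace[OF sym W inv this x(1)]
  obtain v where v: "v \<in> W" "norm v = 1" "\<exists>c. A *v v = c *\<^sub>R v" by blast
  have "v \<bullet> v = 1" using v(2) by (simp add: norm_eq_1)
  then have "v \<notin> S" using v(1) by (auto simp: W_def)
  then show ?case
    using S v \<open>v \<bullet> v = 1\<close> by (intro exI[of _ "insert v S"]) (auto simp: W_def inner_commute)
qed

lemma column_matrix_mult: "column j (A ** B) = A *v column j (B::real^'n::finite^'m::finite)"
  by (simp add: column_def vec_eq_iff matrix_matrix_mult_def matrix_vector_mult_def)

lemma transpose_matrix_mult_entry:
  "(transpose M ** N) $ i $ j = column i M \<bullet> column j (N::real^'n::finite^'m::finite)"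
  by (simp add: matrix_matrix_mult_def transpose_def column_def inner_vec_def)

lemma congruence_entry: "(transpose V ** A ** V) $ i $ j = column i V \<bullet> (A *v column j (V::real^'n::finite^'n))"
  by (simp add: matrix_mul_assoc[symmetric] transpose_matrix_mult_entry column_matrix_mult)

lemma symmetric_matrix_orthogonal_diagonalization:
  fixes A :: "real^'n::finite^'n"
  assumes sym: "transpose A = A"
  obtains V where "orthogonal_matrix V" "\<And>i j. i \<noteq> j \<Longrightarrow> (transpose V ** A ** V) $ i $ j = 0"
proof -
  obtain S where S: "finite S" "card S = CARD('n)" "\<forall>s\<in>S. norm s = 1 \<and> (\<exists>c. A *v s = c *\<^sub>R s)"
    "\<forall>s\<in>S. \<forall>s'\<in>S. s \<noteq> s' \<longrightarrow> s \<bullet> s' = 0"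
    using symmetric_matrix_orthonormal_eigenvectors[OF sym order_refl] by blast
  obtain f where f: "bij_betw f (UNIV::'n set) S"
    using finite_same_card_bij[of "UNIV::'n set" S] S by auto
  have fS: "f i \<in> S" for i using f by (auto simp: bij_betw_def)
  have finj: "f i \<noteq> f j" if "i \<noteq> j" for i j using f that by (auto simp: bij_betw_def inj_on_def)
  define V :: "real^'n^'n" where "V = (\<chi> i j. f j $ i)"
  have column_V: "column j V = f j" for j by (simp add: V_def column_def vec_eq_iff)
  show ?thesis
  proof
    show "orthogonal_matrix V"
      unfolding orthogonal_matrix_orthonormal_columns column_V orthogonal_def
      using S fS finj by auto
    show "(transpose V ** A ** V) $ i $ j = 0" if "i \<noteq> j" for i j
    proof -
      obtain c where "A *v f j = c *\<^sub>R f j" using S(3) fS by blast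
      then show ?thesis using S(4) fS finj[OF that] by (simp add: congruence_entry column_V)
    qed
  qed
qed

lemma det_orthogonal_congruence:
  "orthogonal_matrix V \<Longrightarrow> det (transpose V ** A ** V) = det (A::real^'n::finite^'n)"
  using det_orthogonal_matrix[of V] by (auto simp: det_mul)

lemma orthogonal_matrix_column_nonzero: "orthogonal_matrix V \<Longrightarrow> column i (V::real^'n::finite^'n) \<noteq> 0"
  using orthogonal_matrix_orthonormal_columns[of V] by (metis norm_zero zero_neq_one)

lemma det_mat_1_add_ge_1:
  fixes C :: "real^'n::finite^'n"
  assumes "transpose C = C" "pos_semidef C"
  shows "1 \<le> det (mat 1 + C)"
proof -
  obtain V where V: "orthogonal_matrix V" "\<And>i j. i \<noteq> j \<Longrightarrow> (transpose V ** C ** V) $ i $ j = 0"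
    using symmetric_matrix_orthogonal_diagonalization[OF assms(1)] by blast
  have conj: "transpose V ** (mat 1 + C) ** V = mat 1 + transpose V ** C ** V"
    using V(1) by (simp add: matrix_add_ldistrib matrix_add_rdistrib orthogonal_matrix_def)
  have "det (mat 1 + C) = det (mat 1 + transpose V ** C ** V)"
    using det_orthogonal_congruence[OF V(1), of "mat 1 + C"] by (simp only: conj)
  also have "\<dots> = (\<Prod>i\<in>UNIV. (mat 1 + transpose V ** C ** V) $ i $ i)"
    using V(2) by (intro det_diagonal) (auto simp: mat_def)
  also have "\<dots> \<ge> 1"
    using assms(2) by (intro prod_ge_1) (simp add: congruence_entry pos_semidef_def mat_def)
  finally show ?thesis .
qed

lemma diagonal_matrix_mult:
  "((\<chi> i j. if i = j then a i else 0) ** (\<chi> i j. if i = j then b i else 0) :: real^'n::finite^'n)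
    = (\<chi> i j. if i = j then a i * b i else 0)"
proof -
  have "(\<Sum>k\<in>UNIV. (if i = k then a i else 0) * (if k = j then b k else 0))
      = (\<Sum>k\<in>UNIV. if k = i then a i * (if i = j then b i else 0) else (0::real))" for i j :: 'n
    by (rule sum.cong) auto
  then show ?thesis by (simp add: matrix_matrix_mult_def vec_eq_iff)
qed

lemma pos_def_factorization:
  fixes A :: "real^'n::finite^'n"
  assumes sym: "transpose A = A" and pd: "pos_def A"
  obtains R :: "real^'n^'n" where "invertible R" "A = R ** transpose R"
proof -
  obtain V where V: "orthogonal_matrix V" "\<And>i j. i \<noteq> j \<Longrightarrow> (transpose V ** A ** V) $ i $ j = 0"
    using symmetric_matrix_orthogonal_diagonalization[OF sym] by blast
  define d where "d i = (transpose V ** A ** V) $ i $ i" for i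
  have d_pos: "d i > 0" for i
    using pd orthogonal_matrix_column_nonzero[OF V(1)] by (simp add: d_def congruence_entry pos_def_def)
  define S :: "real^'n^'n" where "S = (\<chi> i j. if i = j then sqrt (d i) else 0)"
  have "S ** S = (\<chi> i j. if i = j then sqrt (d i) * sqrt (d i) else 0)"
    unfolding S_def by (rule diagonal_matrix_mult)
  also have "\<dots> = transpose V ** A ** V"
    using d_pos V(2) by (auto simp: vec_eq_iff d_def less_imp_le)
  finally have SS: "S ** S = transpose V ** A ** V" .
  have "transpose S = S" by (simp add: S_def transpose_def vec_eq_iff)
  have VV: "V ** transpose V = mat 1" using V(1) by (simp add: orthogonal_matrix_def)
  have "det S = (\<Prod>i\<in>UNIV. sqrt (d i))" unfolding S_def by (subst det_diagonal) auto
  then have "det S > 0" using d_pos by (simp add: prod_pos)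
  then have inv: "invertible (V ** S)"
    using det_orthogonal_matrix[OF V(1)] by (auto simp: invertible_det_nz det_mul)
  have "V ** S ** transpose (V ** S) = V ** (S ** S) ** transpose V"
    by (simp add: matrix_transpose_mul \<open>transpose S = S\<close> matrix_mul_assoc)
  also have "\<dots> = (V ** transpose V) ** A ** (V ** transpose V)"
    by (simp only: SS matrix_mul_assoc)
  also have "\<dots> = A"
    by (simp add: VV)
  finally show ?thesis by (metis that inv)
qed

lemma pos_def_det_pos:
  fixes A :: "real^'n::finite^'n"
  assumes "transpose A = A" "pos_def A"
  shows "det A > 0"
proof -
  obtain R :: "real^'n^'n" where R: "invertible R" "A = R ** transpose R"
    using pos_def_factorization[OF assms] .
  have "det A = det R * det R" by (simp add: R(2) det_mul)
  moreover have "det R \<noteq> 0" using R(1) by (simp add: invertible_det_nz)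
  ultimately show ?thesis by (metis not_real_square_gt_zero)
qed

lemma pos_semidef_congruence: "pos_semidef M \<Longrightarrow> pos_semidef (E ** M ** transpose (E::real^'n::finite^'n))"
  by (simp add: pos_semidef_def inner_matrix_vector_transpose flip: matrix_vector_mul_assoc)

lemma pos_def_congruence:
  assumes "pos_def M" "invertible (E::real^'n::finite^'n)"
  shows "pos_def (E ** M ** transpose E)"
proof -
  have "transpose E *v x \<noteq> 0" if "x \<noteq> 0" for x
    using that assms(2) transpose_invertible[OF assms(2)]
    by (metis invertible_def matrix_vector_mul_assoc matrix_vector_mul_lid matrix_vector_mult_0_right)
  with assms(1) show ?thesis
    by (simp add: pos_def_def inner_matrix_vector_transpose flip: matrix_vector_mul_assoc)
qed

lemma pos_def_imp_pos_semidef: "pos_def A \<Longrightarrow> pos_semidef (A::real^'n::finite^'n)"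
  unfolding pos_def_def pos_semidef_def by (metis inner_zero_left less_eq_real_def)

lemma det_le_det_add_pos_semidef:
  fixes A P :: "real^'n::finite^'n"
  assumes "transpose A = A" "pos_def A" "transpose P = P" "pos_semidef P"
  shows "det A \<le> det (A + P)"
proof -
  obtain R :: "real^'n^'n" where R: "invertible R" "A = R ** transpose R"
    using pos_def_factorization[OF assms(1,2)] .
  then obtain R' where R': "R ** R' = mat 1" "R' ** R = mat 1" by (auto simp: invertible_def)
  define C where "C = R' ** P ** transpose R'"
  have "R ** C ** transpose R = (R ** R') ** P ** transpose (R ** R')"
    by (simp add: C_def matrix_transpose_mul matrix_mul_assoc)
  then have RCR: "R ** C ** transpose R = P"
    by (simp add: R'(1))
  have "R ** (mat 1 + C) ** transpose R = R ** transpose R + R ** C ** transpose R"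
    by (simp only: matrix_add_ldistrib matrix_add_rdistrib matrix_mul_rid)
  then have "R ** (mat 1 + C) ** transpose R = A + P"
    by (simp add: R(2) RCR)
  then have "det (A + P) = det (mat 1 + C) * det A"
    by (metis R(2) det_mul det_transpose mult.commute mult.left_commute)
  moreover have "1 \<le> det (mat 1 + C)"
    using assms(3,4) by (intro det_mat_1_add_ge_1)
      (simp_all add: C_def matrix_transpose_mul matrix_mul_assoc pos_semidef_congruence)
  moreover have "det A \<ge> 0" by (simp add: R(2) det_mul)
  ultimately show ?thesis by (metis mult_right_mono mult_1)
qed

lemma pos_def_nonzero: "pos_def (A::real^'n::finite^'n) \<Longrightarrow> A \<noteq> 0"
  unfolding pos_def_def by (metis inner_zero_right less_irrefl matrix_vector_mult_0 zero_neq_one)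

lemma matrix_inv_right: "invertible A \<Longrightarrow> A ** matrix_inv A = mat 1"
  unfolding invertible_def matrix_inv_def by (rule someI2_ex) auto

lemma inner_matrix_inv_nonneg:
  fixes K :: "real^'n::finite^'n"
  assumes "transpose K = K" "pos_def K"
  shows "0 \<le> (matrix_inv K *v d) \<bullet> d"
proof -
  have "invertible K" using pos_def_det_pos[OF assms] by (simp add: invertible_det_nz)
  define y where "y = matrix_inv K *v d"
  have "K *v y = d"
    using matrix_inv_right[OF \<open>invertible K\<close>] by (simp add: y_def matrix_vector_mul_assoc)
  then have "(matrix_inv K *v d) \<bullet> d = y \<bullet> (K *v y)" by (simp add: y_def)
  also have "\<dots> \<ge> 0" using pos_def_imp_pos_semidef[OF assms(2)] by (simp add: pos_semidef_def)
  finally show ?thesis .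
qed

lemma abs_det_mult_det_le_det_add_congruence:
  fixes M E :: "real^'n::finite^'n"
  assumes sym: "transpose M = M" and pd: "pos_def M"
  shows "\<bar>det E\<bar> * det M \<le> det (M + E ** M ** transpose E)"
proof -
  let ?P = "E ** M ** transpose E"
  have sym_P: "transpose ?P = ?P" using sym by (simp add: matrix_transpose_mul matrix_mul_assoc)
  have "det M > 0" by (rule pos_def_det_pos[OF sym pd])
  show ?thesis
  proof (cases "\<bar>det E\<bar> \<le> 1")
    case True
    then have "\<bar>det E\<bar> * det M \<le> det M"
      using \<open>det M > 0\<close> by (simp add: mult_left_le_one_le)
    also have "\<dots> \<le> det (M + ?P)"
      using sym pd sym_P pos_semidef_congruence[OF pos_def_imp_pos_semidef[OF pd]]
      by (rule det_le_det_add_pos_semidef)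
    finally show ?thesis .
  next
    case False
    then have "invertible E" by (auto simp: invertible_det_nz)
    have "\<bar>det E\<bar> \<le> \<bar>det E\<bar> * \<bar>det E\<bar>"
      using mult_right_mono[of 1 "\<bar>det E\<bar>" "\<bar>det E\<bar>"] False by simp
    then have "\<bar>det E\<bar> * det M \<le> det E * det E * det M"
      using \<open>det M > 0\<close> by (simp add: abs_mult_self_eq)
    also have "\<dots> = det ?P" by (simp add: det_mul)
    also have "\<dots> \<le> det (?P + M)"
      using sym_P pos_def_congruence[OF pd \<open>invertible E\<close>] sym pos_def_imp_pos_semidef[OF pd]
      by (rule det_le_det_add_pos_semidef)
    finally show ?thesis by (simp add: add.commute)
  qed
qed

subsection \<open>From a kernel bound to the \<open>L\<^sup>1\<close> estimate\<close>

lemma kernel_nonneg: "0 \<le> kernel Q B X Y t"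
  by (simp add: kernel_def)

lemma Pt_indicator_le:
  assumes E: "E \<in> sets lebesgue" "emeasure lebesgue E < \<infinity>"
    and bound: "\<And>Y. kernel Q B X Y t \<le> c"
  shows "Pt Q B t (indicator E) X \<le> c * measure lebesgue E"
proof (cases "integrable lebesgue (\<lambda>Y. kernel Q B X Y t * indicator E Y)")
  case True
  have "Pt Q B t (indicator E) X \<le> (\<integral>Y. c * indicator E Y \<partial>lebesgue)"
    unfolding Pt_def
  proof (rule integral_mono[OF True])
    show "integrable lebesgue (\<lambda>Y. c * indicator E Y :: real)" using E by simp
    show "kernel Q B X Y t * indicator E Y \<le> c * indicator E Y" for Y
      using bound[of Y] by (simp add: indicator_def)
  qed
  then show ?thesis using E by simp
next
  case False
  have "0 \<le> c" using kernel_nonneg bound order_trans by blast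
  then show ?thesis using False by (simp add: Pt_def not_integrable_integral_eq)
qed

lemma nn_integral_dist_indicator_ge:
  fixes f :: "'a \<Rightarrow> real"
  assumes E: "E \<in> sets M" "emeasure M E < \<infinity>"
    and le: "\<And>x. f x \<le> c * measure M E"
  shows "ennreal (measure M E - c * (measure M E)\<^sup>2) \<le> (\<integral>\<^sup>+ x. ennreal \<bar>f x - indicator E x\<bar> \<partial>M)"
proof -
  define m where "m = measure M E"
  define r where "r = max 0 (1 - c * m)"
  have "m - c * m\<^sup>2 = (1 - c * m) * m" by (simp add: power2_eq_square algebra_simps)
  also have "\<dots> \<le> r * m" by (simp add: r_def m_def mult_right_mono)
  finally have "m - c * m\<^sup>2 \<le> r * m" .
  then have "ennreal (m - c * m\<^sup>2) \<le> ennreal (r * m)" by (rule ennreal_leI)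
  also have "\<dots> = (\<integral>\<^sup>+ x. ennreal r * indicator E x \<partial>M)"
    using E by (simp add: nn_integral_cmult_indicator emeasure_eq_ennreal_measure m_def r_def
        ennreal_mult less_top)
  also have "\<dots> \<le> (\<integral>\<^sup>+ x. ennreal \<bar>f x - indicator E x\<bar> \<partial>M)"
  proof (rule nn_integral_mono)
    show "ennreal r * indicator E x \<le> ennreal \<bar>f x - indicator E x\<bar>" for x
    proof (cases "x \<in> E")
      case True
      have "r \<le> \<bar>f x - 1\<bar>" using le[of x] by (auto simp: r_def m_def abs_if)
      then show ?thesis using True by (simp add: ennreal_leI)
    qed simp
  qed
  finally show ?thesis by (simp add: m_def)
qed

lemma omega_pos: "omega TYPE('n::finite) > 0"
proof -
  have "omega TYPE('n) = measure lborel (ball (0::real^'n) 1)"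
    by (simp add: omega_def)
  also have "\<dots> > 0" by (rule content_ball_pos) simp
  finally show ?thesis .
qed

subsection \<open>The matrix \<open>tK(t)\<close>\<close>

definition gramian_integrand :: "real^'n::finite^'n \<Rightarrow> real^'n^'n \<Rightarrow> real \<Rightarrow> real^'n^'n" where
  "gramian_integrand Q B r = mat_exp (r *\<^sub>R B) ** Q ** mat_exp (r *\<^sub>R transpose B)"

definition gramian :: "real^'n::finite^'n \<Rightarrow> real^'n^'n \<Rightarrow> real \<Rightarrow> real^'n^'n" where
  "gramian Q B t = integral {0..t} (gramian_integrand Q B)"

lemma scaleR_Kmat_eq_gramian: "t > 0 \<Longrightarrow> t *\<^sub>R Kmat Q B t = gramian Q B t"
  by (simp add: Kmat_def gramian_def gramian_integrand_def[abs_def])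

context
  fixes Q B :: "real^'n::finite^'n"
  assumes symmetric_Q: "transpose Q = Q" and pos_def_Kmat: "\<forall>t>0. pos_def (Kmat Q B t)"
begin

text \<open>Integrability is not assumed separately: a non-integrable integrand has integral \<open>0\<close>,
  which is not positive definite.\<close>

lemma gramian_integrable:
  assumes "t > 0"
  shows "gramian_integrand Q B integrable_on {0..t}"
proof (rule ccontr)
  assume "\<not> ?thesis"
  then have "t *\<^sub>R Kmat Q B t = 0"
    by (simp add: scaleR_Kmat_eq_gramian[OF assms] gramian_def not_integrable_integral)
  with assms pos_def_Kmat pos_def_nonzero show False by auto
qed

lemma pos_def_gramian: "t > 0 \<Longrightarrow> pos_def (gramian Q B t)"
  using pos_def_Kmat
  by (auto simp: pos_def_def scaleR_matrix_vector_assoc[symmetric] simp flip: scaleR_Kmat_eq_gramian)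

lemma symmetric_gramian: "t > 0 \<Longrightarrow> transpose (gramian Q B t) = gramian Q B t"
proof -
  assume "t > 0"
  have "transpose (gramian Q B t) = integral {0..t} (transpose \<circ> gramian_integrand Q B)"
    unfolding gramian_def
    by (rule integral_linear[OF gramian_integrable[OF \<open>t > 0\<close>] bounded_linear_transpose, symmetric])
  also have "transpose \<circ> gramian_integrand Q B = gramian_integrand Q B"
    by (simp add: fun_eq_iff gramian_integrand_def matrix_transpose_mul transpose_mat_exp
        transpose_scalar symmetric_Q matrix_mul_assoc)
  finally show ?thesis by (simp add: gramian_def)
qed

lemma det_gramian_pos: "t > 0 \<Longrightarrow> det (gramian Q B t) > 0"
  by (intro pos_def_det_pos symmetric_gramian pos_def_gramian)

lemma gramian_double:
  assumes "t > 0"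
  defines "E \<equiv> mat_exp (t *\<^sub>R B)"
  shows "gramian Q B (2 * t) = gramian Q B t + E ** gramian Q B t ** transpose E"
proof -
  let ?F = "gramian_integrand Q B"
  have "?F integrable_on {0..2 * t}" using assms by (intro gramian_integrable) simp
  then have "gramian Q B (2 * t) = gramian Q B t + integral {t..2 * t} ?F"
    unfolding gramian_def using assms
    by (simp add: Henstock_Kurzweil_Integration.integral_combine)
  also have "integral {t..2 * t} ?F = integral {0..t} (?F \<circ> (+) t)"
  proof -
    have "?F integrable_on {t..2 * t}"
      by (rule integrable_subinterval_real[OF \<open>?F integrable_on {0..2 * t}\<close>]) (use assms in auto)
    then have "((?F \<circ> (+) t) has_integral integral {t..2 * t} ?F) {0..t}"
      using has_integral_shift_Icc_real[of ?F t _ 0 t] by (simp add: integrable_integral)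
    then show ?thesis by (rule integral_unique[symmetric])
  qed
  also have "?F \<circ> (+) t = (\<lambda>X. E ** X ** transpose E) \<circ> ?F"
  proof (rule ext)
    fix r
    have "mat_exp ((t + r) *\<^sub>R transpose B) = mat_exp (r *\<^sub>R transpose B) ** transpose E"
      using mat_exp_scaleR_add[of r t "transpose B"]
      by (simp add: E_def add.commute transpose_mat_exp transpose_scalar)
    then show "(?F \<circ> (+) t) r = ((\<lambda>X. E ** X ** transpose E) \<circ> ?F) r"
      by (simp add: gramian_integrand_def E_def mat_exp_scaleR_add matrix_mul_assoc)
  qed
  also have "integral {0..t} ((\<lambda>X. E ** X ** transpose E) \<circ> ?F) = E ** gramian Q B t ** transpose E"
    unfolding gramian_def using assms
    by (intro integral_linear[OF gramian_integrable bounded_linear_congruence])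
  finally show ?thesis .
qed

lemma det_gramian_half_le:
  assumes "t > 0"
  shows "exp ((t/2) * trace B) * det (gramian Q B (t/2)) \<le> det (gramian Q B t)"
  using abs_det_mult_det_le_det_add_congruence[OF symmetric_gramian pos_def_gramian,
      of "t/2" "mat_exp ((t/2) *\<^sub>R B)"]
    gramian_double[of "t/2"] assms
  by (simp add: det_mat_exp)

lemma kernel_le_det_gramian:
  assumes "t > 0"
  shows "kernel Q B X Y t \<le> (4 * pi) powr (- real CARD('n) / 2) / sqrt (det (gramian Q B t))"
proof -
  let ?c = "(4 * pi) powr (- real CARD('n) / 2) / sqrt (det (gramian Q B t))"
  have "transpose (Kmat Q B t) = Kmat Q B t"
    using symmetric_gramian[OF assms] assms
    by (simp add: transpose_scalar flip: scaleR_Kmat_eq_gramian[OF assms])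
  then have "0 \<le> msq Q B t X Y"
    unfolding msq_def Let_def using pos_def_Kmat assms by (simp add: inner_matrix_inv_nonneg)
  then have "exp (- msq Q B t X Y / (4 * t)) \<le> 1" using assms by simp
  moreover have "det (gramian Q B t) > 0" using assms by (rule det_gramian_pos)
  ultimately have "?c * exp (- msq Q B t X Y / (4 * t)) \<le> ?c" by (intro mult_left_le) simp_all
  moreover have "det (gramian Q B t) powr (-1/2) = 1 / sqrt (det (gramian Q B t))"
    using \<open>det (gramian Q B t) > 0\<close> by (simp add: powr_minus_divide powr_half_sqrt)
  then have "kernel Q B X Y t = ?c * exp (- msq Q B t X Y / (4 * t))"
    by (simp add: kernel_def scaleR_Kmat_eq_gramian[OF assms])
  ultimately show ?thesis by simp
qed

lemma kernel_le_Vfun_half: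
  assumes "t > 0"
  shows "kernel Q B X Y t
    \<le> (4 * pi) powr (- real CARD('n) / 2) * omega TYPE('n) / Vfun Q B (t/2) * exp (- (t/4) * trace B)"
proof -
  let ?a = "(4 * pi) powr (- real CARD('n) / 2)" and ?e = "exp ((t/4) * trace B)"
  have "det (gramian Q B (t/2)) > 0" "det (gramian Q B t) > 0"
    using assms by (simp_all add: det_gramian_pos)
  have "exp ((t/2) * trace B) = ?e * ?e"
    by (simp flip: exp_add)
  then have "sqrt (?e * ?e * det (gramian Q B (t/2))) \<le> sqrt (det (gramian Q B t))"
    using det_gramian_half_le[OF assms] by simp
  then have "?e * sqrt (det (gramian Q B (t/2))) \<le> sqrt (det (gramian Q B t))"
    by (simp add: real_sqrt_mult)
  then have "?a / sqrt (det (gramian Q B t)) \<le> ?a / (?e * sqrt (det (gramian Q B (t/2))))"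
    using \<open>det (gramian Q B (t/2)) > 0\<close> \<open>det (gramian Q B t) > 0\<close> by (intro divide_left_mono) auto
  also have "\<dots> = ?a * omega TYPE('n) / Vfun Q B (t/2) * exp (- (t/4) * trace B)"
    using omega_pos[where 'n='n] assms
    by (simp add: Vfun_def scaleR_Kmat_eq_gramian exp_minus field_simps)
  finally show ?thesis
    by (rule order_trans[OF kernel_le_det_gramian[OF assms]])
qed

end

theorem lemma3p2:
  assumes "CARD('n) \<ge> 2"
  shows "\<exists>b>0. \<forall>(Q::real^'n^'n) (B::real^'n^'n).
     transpose Q = Q \<and> pos_semidef Q \<and> (\<forall>t>0. pos_def (Kmat Q B t)) \<longrightarrow>
     (\<forall>E t. E \<in> sets lebesgue \<and> emeasure lebesgue E < \<infinity> \<and> t > 0 \<longrightarrow>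
        ennreal (measure lebesgue E
           - b / Vfun Q B (t/2) * exp (- (t/4) * trace B) * (measure lebesgue E)\<^sup>2)
        \<le> (\<integral>\<^sup>+ X. ennreal \<bar>Pt Q B t (indicator E) X - indicator E X\<bar> \<partial>lebesgue))"
proof -
  define b where "b = (4 * pi) powr (- real CARD('n) / 2) * omega TYPE('n)"
  have "b > 0" by (simp add: b_def omega_pos)
  moreover have "ennreal (measure lebesgue E
           - b / Vfun Q B (t/2) * exp (- (t/4) * trace B) * (measure lebesgue E)\<^sup>2)
        \<le> (\<integral>\<^sup>+ X. ennreal \<bar>Pt Q B t (indicator E) X - indicator E X\<bar> \<partial>lebesgue)"
    if Q: "transpose Q = Q" "\<forall>t>0. pos_def (Kmat Q B t)"
      and E: "E \<in> sets lebesgue" "emeasure lebesgue E < \<infinity>" and "t > 0"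
    for Q B :: "real^'n^'n" and E t
  proof (rule nn_integral_dist_indicator_ge[OF E])
    show "Pt Q B t (indicator E) X \<le> b / Vfun Q B (t/2) * exp (- (t/4) * trace B) * measure lebesgue E" for X
      using kernel_le_Vfun_half[OF Q \<open>t > 0\<close>] by (intro Pt_indicator_le[OF E]) (simp add: b_def)
  qed
  ultimately show ?thesis by blast
qed

end
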